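(* Assume $\sum_kkq_k<2$ and that there is $R>1$ with $\sum_kR^kp_k<\infty$ and $\sum_kR^kq_k<\infty$. Let $z^*:=\inf\{z\in[1,2]:\Psi(z)=0\}$ with $\inf\emptyset=\infty$. Then $z^*\in[1,2]$, $\Psi(z^* )=0$, $\Phi(z^* )\ge0$, $\Phi(0)=\Psi(0)=0$, and $\Psi(z)\ge0$ for every $z\in[0,z^*]$. Furthermore, if there exists an odd number $k$ such that $q_k>0$, then $z^*<2$.
   Context: $\beta_{\mathrm o}\ge0$, $(p_k)_{k\ge0}$ a probability law on $\mathbb Z_+$, $\beta_{\mathrm c}>0$, $(q_k)_{k\ge0}$ a probability law on $\mathbb Z_+$, with the convention $p_1=q_2=0$. $\Phi(z):=\beta_{\mathrm o}\big(\sum_{k\ge0}p_k(1-z)^k-(1-z)\big)$ and $\Psi(z):=\beta_{\mathrm c}\big(\sum_{k\ge0}q_k(1-z)^k-(1-z)^2\big)$ for $z$ where the series converge absolutely. *)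

theory Defs
  imports "HOL-Analysis.Analysis" "HOL-Library.Extended_Real"
begin

text \<open>Phi(z) = beta_o (sum_k p_k (1-z)^k - (1-z)); Psi(z) = beta_c (sum_k q_k (1-z)^k - (1-z)^2).
  The series are used only where they converge absolutely.\<close>

definition Phi :: "real \<Rightarrow> (nat \<Rightarrow> real) \<Rightarrow> real \<Rightarrow> real" where
  "Phi \<beta>o p z = \<beta>o * ((\<Sum>k. p k * (1 - z) ^ k) - (1 - z))"

definition Psi :: "real \<Rightarrow> (nat \<Rightarrow> real) \<Rightarrow> real \<Rightarrow> real" where
  "Psi \<beta>c q z = \<beta>c * ((\<Sum>k. q k * (1 - z) ^ k) - (1 - z) ^ 2)"

definition zstar :: "real \<Rightarrow> (nat \<Rightarrow> real) \<Rightarrow> ereal" where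
  "zstar \<beta>c q = (if {z \<in> {1..2}. Psi \<beta>c q z = 0} = {} then \<infinity>
                   else ereal (Inf {z \<in> {1..2}. Psi \<beta>c q z = 0}))"

definition prob_law :: "(nat \<Rightarrow> real) \<Rightarrow> bool" where
  "prob_law p \<longleftrightarrow> (\<forall>k. 0 \<le> p k) \<and> p sums 1"

end

theory Submission
  imports Defs
begin

text \<open>Write \<open>G\<^sub>p\<close>, \<open>G\<^sub>q\<close> for the generating functions, so that
  \<open>\<Phi>(z) = \<beta>\<^sub>o (G\<^sub>p(1-z) - (1-z))\<close> and \<open>\<Psi>(z) = \<beta>\<^sub>c (G\<^sub>q(1-z) - (1-z)\<^sup>2)\<close>.
  Both vanish at \<open>z = 0\<close> because \<open>G(1) = 1\<close>.
  For \<open>s \<in> [0,1]\<close> the termwise bound \<open>s\<^sup>k - s\<^sup>2 \<ge> (2 - k)(1 - s) s\<^sup>2\<close> (Bernoulli) sums to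
  \<open>G\<^sub>q(s) - s\<^sup>2 \<ge> (2 - G\<^sub>q'(1))(1 - s) s\<^sup>2 \<ge> 0\<close>, so \<open>\<Psi> \<ge> 0\<close> on \<open>[0,1]\<close>; and
  \<open>\<Psi>(2) = \<beta>\<^sub>c (G\<^sub>q(-1) - 1) \<le> 0\<close>, strictly if some odd \<open>q\<^sub>k\<close> is positive.
  Since \<open>R > 1\<close>, \<open>\<Psi>\<close> is continuous on \<open>[0,2]\<close>, so its zero set in \<open>[1,2]\<close> is closed and,
  by the intermediate value theorem, nonempty; hence \<open>z\<^sup>*\<close> is its least element and
  \<open>\<Psi>\<close> cannot change sign on \<open>[1,z\<^sup>*]\<close>. Finally \<open>s \<le> s\<^sup>k\<close> for \<open>s \<in> [-1,0]\<close> gives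
  \<open>G\<^sub>p(1 - z\<^sup>*) \<ge> 1 - z\<^sup>*\<close>, i.e. \<open>\<Phi>(z\<^sup>*) \<ge> 0\<close>.\<close>

lemma power_minus_square_ge:
  fixes s :: real
  assumes "0 \<le> s" "s \<le> 1"
  shows "(2 - real k) * (1 - s) * s\<^sup>2 \<le> s ^ k - s\<^sup>2"
proof (cases "k \<ge> 2")
  case True
  then obtain n where k: "k = n + 2" using le_Suc_ex by (metis add.commute)
  have "1 + real n * (s - 1) \<le> s ^ n"
    using Bernoulli_inequality[of "s - 1" n] assms by simp
  then have "s\<^sup>2 * (1 + real n * (s - 1)) \<le> s\<^sup>2 * s ^ n"
    by (intro mult_left_mono) auto
  moreover have "s ^ k = s\<^sup>2 * s ^ n" unfolding k power_add by (rule mult.commute)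
  moreover have "real k = real n + 2" using k by simp
  ultimately show ?thesis by (simp add: algebra_simps)
next
  case False
  then have "k = 0 \<or> k = 1" by auto
  then have "s ^ k - s\<^sup>2 - (2 - real k) * (1 - s) * s\<^sup>2
      = (1 - s)\<^sup>2 * (if k = 0 then 1 + 2 * s else s)"
    by (auto simp: algebra_simps power2_eq_square)
  moreover have "0 \<le> (1 - s)\<^sup>2 * (if k = 0 then 1 + 2 * s else s)" using assms by simp
  ultimately show ?thesis by linarith
qed

lemma power_ge_self_of_nonpos:
  fixes s :: real
  assumes "-1 \<le> s" "s \<le> 0"
  shows "s \<le> s ^ k"
proof (cases k)
  case (Suc m)
  have "\<bar>s\<bar> ^ m \<le> 1" using assms by (intro power_le_one) auto
  then have "\<bar>s ^ k\<bar> \<le> \<bar>s\<bar>" using Suc by (simp add: abs_mult power_abs mult_right_le_one_le)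
  then show ?thesis using assms by linarith
qed (use assms in simp)

lemma prob_law_summable:
  assumes "prob_law q"
  shows "summable q"
  using assms by (auto simp: prob_law_def sums_iff)

lemma prob_law_suminf_mult:
  assumes "prob_law q"
  shows "(\<Sum>k. q k * c) = c"
  using assms sums_mult2[of q 1 c] by (simp add: prob_law_def sums_iff)

lemma prob_law_summable_power:
  assumes "prob_law q" "\<bar>s\<bar> \<le> 1"
  shows "summable (\<lambda>k. q k * s ^ k)"
proof (rule summable_comparison_test'[OF prob_law_summable[OF assms(1)]])
  fix k
  have "0 \<le> q k" using assms(1) by (simp add: prob_law_def)
  moreover have "\<bar>s\<bar> ^ k \<le> 1" using assms(2) by (simp add: power_le_one)
  ultimately show "norm (q k * s ^ k) \<le> q k"
    by (simp add: abs_mult power_abs mult_left_le)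
qed

lemma prob_law_generating_ge_square:
  fixes q :: "nat \<Rightarrow> real"
  assumes "prob_law q" "summable (\<lambda>k. real k * q k)" "(\<Sum>k. real k * q k) \<le> 2"
    and "0 \<le> s" "s \<le> 1"
  shows "s\<^sup>2 \<le> (\<Sum>k. q k * s ^ k)"
proof -
  have q_nonneg: "\<And>k. 0 \<le> q k" using assms(1) by (simp add: prob_law_def)
  have q_summable: "summable q" using assms(1) by (rule prob_law_summable)
  have power_summable: "summable (\<lambda>k. q k * s ^ k)"
    using assms by (intro prob_law_summable_power) auto
  have lower_summable: "summable (\<lambda>k. (2 * q k - real k * q k) * ((1 - s) * s\<^sup>2))"
    by (intro summable_mult2 summable_diff summable_mult q_summable assms(2))
  have "(\<Sum>k. 2 * q k - real k * q k) = 2 - (\<Sum>k. real k * q k)"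
    using suminf_diff[OF summable_mult[OF q_summable, of 2] assms(2)]
      prob_law_suminf_mult[OF assms(1), of 2]
    by (simp add: suminf_mult mult.commute)
  moreover have "(\<Sum>k. (2 * q k - real k * q k) * ((1 - s) * s\<^sup>2))
      = (\<Sum>k. 2 * q k - real k * q k) * ((1 - s) * s\<^sup>2)"
    by (intro suminf_mult2[symmetric] summable_diff summable_mult q_summable assms(2))
  ultimately have "0 \<le> (\<Sum>k. (2 * q k - real k * q k) * ((1 - s) * s\<^sup>2))"
    using assms(3-5) by simp
  also have "\<dots> \<le> (\<Sum>k. q k * s ^ k - q k * s\<^sup>2)"
  proof (intro suminf_le lower_summable summable_diff power_summable)
    show "summable (\<lambda>k. q k * s\<^sup>2)" using q_summable by (rule summable_mult2)
    fix k
    have "q k * ((2 - real k) * (1 - s) * s\<^sup>2) \<le> q k * (s ^ k - s\<^sup>2)"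
      using q_nonneg assms(4,5) by (intro mult_left_mono power_minus_square_ge)
    then show "(2 * q k - real k * q k) * ((1 - s) * s\<^sup>2) \<le> q k * s ^ k - q k * s\<^sup>2"
      by (simp add: algebra_simps)
  qed
  also have "\<dots> = (\<Sum>k. q k * s ^ k) - s\<^sup>2"
    using suminf_diff[OF power_summable summable_mult2[OF q_summable]]
      prob_law_suminf_mult[OF assms(1)]
    by simp
  finally show ?thesis by simp
qed

lemma prob_law_generating_ge_self:
  assumes "prob_law p" "-1 \<le> s" "s \<le> 0"
  shows "s \<le> (\<Sum>k. p k * s ^ k)"
proof -
  have "(\<Sum>k. p k * s) \<le> (\<Sum>k. p k * s ^ k)"
    using assms
    by (intro suminf_le summable_mult2 prob_law_summable prob_law_summable_power
          mult_left_mono power_ge_self_of_nonpos)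
       (auto simp: prob_law_def)
  then show ?thesis using prob_law_suminf_mult[OF assms(1)] by simp
qed

lemma prob_law_generating_minus_one_le:
  assumes "prob_law q"
  shows "(\<Sum>k. q k * (-1) ^ k) \<le> 1"
proof -
  have "(\<Sum>k. q k * (-1) ^ k) \<le> (\<Sum>k. q k * 1)"
    using assms
    by (intro suminf_le summable_mult2 prob_law_summable prob_law_summable_power)
       (auto simp: prob_law_def minus_one_power_iff)
  then show ?thesis using prob_law_suminf_mult[OF assms, of 1] by simp
qed

lemma prob_law_generating_minus_one_less:
  assumes "prob_law q" "odd k" "q k > 0"
  shows "(\<Sum>k. q k * (-1) ^ k) < 1"
proof -
  have alternating_summable: "summable (\<lambda>k. q k * (-1) ^ k)"
    using assms(1) by (rule prob_law_summable_power) simp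
  have "0 < (\<Sum>j. q j - q j * (-1) ^ j)"
  proof (rule suminf_pos2[of _ k])
    show "summable (\<lambda>j. q j - q j * (-1) ^ j)"
      using prob_law_summable[OF assms(1)] alternating_summable by (rule summable_diff)
    show "0 \<le> q j - q j * (-1) ^ j" for j
      using assms(1) by (simp add: prob_law_def minus_one_power_iff)
  qed (use assms(2,3) in simp)
  also have "\<dots> = 1 - (\<Sum>j. q j * (-1) ^ j)"
    using suminf_diff[OF prob_law_summable[OF assms(1)] alternating_summable]
      prob_law_suminf_mult[OF assms(1), of 1]
    by simp
  finally show ?thesis by simp
qed

lemma continuous_on_Psi:
  assumes "R > 1" "summable (\<lambda>k. R ^ k * q k)"
  shows "continuous_on {0..2} (Psi \<beta>c q)"
proof (intro continuous_at_imp_continuous_on ballI)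
  fix z :: real assume "z \<in> {0..2}"
  have "summable (\<lambda>k. q k * R ^ k)" using assms(2) by (simp add: mult.commute)
  then have "isCont (\<lambda>x. \<Sum>k. q k * x ^ k) (1 - z)"
    by (rule isCont_powser) (use \<open>z \<in> {0..2}\<close> assms(1) in auto)
  then have "isCont (\<lambda>z. \<Sum>k. q k * (1 - z) ^ k) z"
    by (rule isCont_o2[rotated]) (intro continuous_intros)
  then show "isCont (Psi \<beta>c q) z" unfolding Psi_def[abs_def] by (intro continuous_intros)
qed

lemma Inf_zeros_continuous_on:
  fixes f :: "real \<Rightarrow> real"
  assumes "a \<le> b" "continuous_on {a..b} f" "0 \<le> f a" "f b \<le> 0"
  defines "Z \<equiv> {x \<in> {a..b}. f x = 0}"
  shows "Z \<noteq> {}" and "Inf Z \<in> Z" and "\<forall>y\<in>{a..Inf Z}. 0 \<le> f y"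
proof -
  show nonempty: "Z \<noteq> {}" using IVT2'[OF assms(4,3,1,2)] by (auto simp: Z_def)
  have "bdd_below Z" by (rule bdd_belowI[of _ a]) (simp add: Z_def)
  moreover have "closed Z"
    unfolding Z_def by (rule continuous_closed_preimage_constant[OF assms(2)]) simp
  ultimately show Inf_mem: "Inf Z \<in> Z" using nonempty closed_contains_Inf by blast
  show "\<forall>y\<in>{a..Inf Z}. 0 \<le> f y"
  proof (rule ballI, rule ccontr)
    fix y assume y: "y \<in> {a..Inf Z}" "\<not> 0 \<le> f y"
    have "y \<le> b" using y Inf_mem by (auto simp: Z_def)
    then obtain x where "a \<le> x" "x \<le> y" "f x = 0"
      using IVT2'[of f y 0 a] y assms(3) continuous_on_subset[OF assms(2)] by force
    then have "x \<in> Z" using \<open>y \<le> b\<close> by (simp add: Z_def)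
    then have "Inf Z \<le> x" using \<open>bdd_below Z\<close> by (rule cInf_lower)
    then have "x = y" using \<open>x \<le> y\<close> y(1) by simp
    then show False using \<open>f x = 0\<close> y(2) by simp
  qed
qed

theorem lemma3p1:
  fixes \<beta>o \<beta>c R :: real and p q :: "nat \<Rightarrow> real"
  assumes "\<beta>o \<ge> 0" and "prob_law p" and "\<beta>c > 0" and "prob_law q"
    and "p 1 = 0" and "q 2 = 0"
    and "summable (\<lambda>k. real k * q k)" and "(\<Sum>k. real k * q k) < 2"
    and "R > 1" and "summable (\<lambda>k. R ^ k * p k)" and "summable (\<lambda>k. R ^ k * q k)"
  shows "\<exists>z. zstar \<beta>c q = ereal z \<and> 1 \<le> z \<and> z \<le> 2
           \<and> Psi \<beta>c q z = 0 \<and> Phi \<beta>o p z \<ge> 0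
           \<and> Phi \<beta>o p 0 = 0 \<and> Psi \<beta>c q 0 = 0
           \<and> (\<forall>y\<in>{0..z}. Psi \<beta>c q y \<ge> 0)
           \<and> ((\<exists>k. odd k \<and> q k > 0) \<longrightarrow> z < 2)"
proof -
  define Z where "Z = {z \<in> {1..2}. Psi \<beta>c q z = 0}"
  define z where "z = Inf Z"
  have Psi_nonneg_01: "0 \<le> Psi \<beta>c q y" if "y \<in> {0..1}" for y
    using prob_law_generating_ge_square[OF assms(4,7), of "1 - y"] assms(3,8) that
    by (simp add: Psi_def)
  have Psi_2: "Psi \<beta>c q 2 = \<beta>c * ((\<Sum>k. q k * (-1) ^ k) - 1)" by (simp add: Psi_def)
  have "continuous_on {1..2} (Psi \<beta>c q)"
    using continuous_on_Psi[OF assms(9,11)] by (rule continuous_on_subset) auto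
  moreover have "0 \<le> Psi \<beta>c q 1" by (rule Psi_nonneg_01) simp
  moreover have "Psi \<beta>c q 2 \<le> 0"
    using prob_law_generating_minus_one_le[OF assms(4)] assms(3) Psi_2 by (simp add: mult_le_0_iff)
  ultimately have "Z \<noteq> {}" "z \<in> Z" "\<forall>y\<in>{1..z}. 0 \<le> Psi \<beta>c q y"
    using Inf_zeros_continuous_on[of 1 2 "Psi \<beta>c q"] unfolding Z_def z_def by auto
  then have "zstar \<beta>c q = ereal z" "1 \<le> z" "z \<le> 2" "Psi \<beta>c q z = 0"
    and "\<forall>y\<in>{0..z}. 0 \<le> Psi \<beta>c q y"
    using Psi_nonneg_01 by (auto simp: zstar_def Z_def z_def)
  moreover have "0 \<le> Phi \<beta>o p z"
    using prob_law_generating_ge_self[OF assms(2), of "1 - z"] \<open>1 \<le> z\<close> \<open>z \<le> 2\<close> assms(1)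
    by (simp add: Phi_def)
  moreover have "Phi \<beta>o p 0 = 0" "Psi \<beta>c q 0 = 0"
    using prob_law_suminf_mult[OF assms(2), of 1] prob_law_suminf_mult[OF assms(4), of 1]
    by (simp_all add: Phi_def Psi_def)
  moreover have "z < 2" if "odd k" "q k > 0" for k
    using prob_law_generating_minus_one_less[OF assms(4) that] assms(3) Psi_2
      \<open>Psi \<beta>c q z = 0\<close> \<open>z \<le> 2\<close>
    by (cases "z = 2") (auto simp: mult_less_0_iff)
  ultimately show ?thesis by blast
qed

end
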